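(* Let $M$ be a model of $\mathrm{AA}_0$. The following are equivalent: (i) $(M,\le)$ is linearly ordered; (ii) there is no $x\in M$ with $0<x<1$; (iii) for every $x\in M$, either $x=0$ or $|x|=1$; (iv) $M$ is a model of $\mathrm{PA}^-$.
   Context: Structures are complete metric spaces $(M,d)$ of diameter at most $1$ in the language $L=\{+,\cdot,\wedge,\vee,0,1\}$, all operations $1$-Lipschitz (sum metric on products), $d$ the only relation symbol; conditions are written with affine formulas (built from $1$ and $d(t_1,t_2)$ using $+$, scalar multiplication, $\sup$, $\inf$) and free variables are universally quantified. Notation: $|x|=d(x,0)$; $x\le y$ means $x\wedge y=x$; $x<y$ means $x\le y$ and $x\ne y$; $nx$ and $x^n$ are iterated sums/products. $\mathrm{AA}_0$ is the set of conditions: (A1) the identities of the nonnegative part of a lattice-ordered commutative ring with identity (commutative semiring axioms for $+,\cdot,0,1$, lattice axioms for $\wedge,\vee$, distributivity of $+$ and $\cdot$ over $\wedge,\vee$, and $0\le x$); (A2) $\inf_y d(x,(x\wedge y)+1)=1-|x|$ and $x\le x^2$; (A3) $d(x+z,y+z)=d(x,y)$; (A4) $d(y,z)\le d(xy,xz)+1-|x|$; (A5) $d(xy,xz)=d(x^ny,x^nz)\le d(y,z)$; (A6) $d(nx,ny)=d(x^n,y^n)=d(x,y)$ for $n\ge1$; (A7) $|x\wedge y|+|x\vee y|=|x|+|y|$; (A8) $|xy+z|=|(x\wedge y)+z|$; (A9) $|x+y+z|=|(x\vee y)+z|$; (A10) $\inf_t d((x\wedge y)+t,y)=0$. $\mathrm{PA}^-$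 is the first-order theory (models taken with the discrete metric) of nonnegative parts of lattice-ordered commutative rings with identity whose order is linear and discrete. *)

theory Defs
  imports Main "HOL.Real"
begin

text \<open>An L-structure: metric d, operations +, *, meet, join, constants 0, 1.
  The carrier is the whole type 'a.\<close>

record 'a lstr =
  dd  :: "'a \<Rightarrow> 'a \<Rightarrow> real"
  pl  :: "'a \<Rightarrow> 'a \<Rightarrow> 'a"
  tm  :: "'a \<Rightarrow> 'a \<Rightarrow> 'a"
  mt  :: "'a \<Rightarrow> 'a \<Rightarrow> 'a"
  jn  :: "'a \<Rightarrow> 'a \<Rightarrow> 'a"
  zr  :: 'a
  un  :: 'a

definition nrm :: "'a lstr \<Rightarrow> 'a \<Rightarrow> real" where
  "nrm M x = dd M x (zr M)"

definition le :: "'a lstr \<Rightarrow> 'a \<Rightarrow> 'a \<Rightarrow> bool" where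
  "le M x y \<longleftrightarrow> mt M x y = x"

definition lt :: "'a lstr \<Rightarrow> 'a \<Rightarrow> 'a \<Rightarrow> bool" where
  "lt M x y \<longleftrightarrow> le M x y \<and> x \<noteq> y"

fun nsum :: "'a lstr \<Rightarrow> nat \<Rightarrow> 'a \<Rightarrow> 'a" where
  "nsum M 0 x = zr M"
| "nsum M (Suc n) x = pl M x (nsum M n x)"

fun npow :: "'a lstr \<Rightarrow> 'a \<Rightarrow> nat \<Rightarrow> 'a" where
  "npow M x 0 = un M"
| "npow M x (Suc n) = tm M x (npow M x n)"

definition metric_structure :: "'a lstr \<Rightarrow> bool" where
  "metric_structure M \<longleftrightarrow>
     (\<forall>x y. dd M x y = 0 \<longleftrightarrow> x = y) \<and>
     (\<forall>x y. dd M x y = dd M y x) \<and>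
     (\<forall>x y z. dd M x z \<le> dd M x y + dd M y z) \<and>
     (\<forall>x y. dd M x y \<le> 1) \<and>
     (\<forall>X :: nat \<Rightarrow> 'a.
        (\<forall>e>0. \<exists>N. \<forall>m\<ge>N. \<forall>n\<ge>N. dd M (X m) (X n) < e) \<longrightarrow>
        (\<exists>l. \<forall>e>0. \<exists>N. \<forall>n\<ge>N. dd M (X n) l < e)) \<and>
     (\<forall>f \<in> {pl M, tm M, mt M, jn M}. \<forall>x y x' y'.
        dd M (f x y) (f x' y') \<le> dd M x x' + dd M y y')"

text \<open>(A1): identities of the nonnegative part of a lattice-ordered commutative ring with 1.\<close>
definition A1 :: "'a lstr \<Rightarrow> bool" where
  "A1 M \<longleftrightarrow>
     (\<forall>x y z. pl M (pl M x y) z = pl M x (pl M y z)) \<and>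
     (\<forall>x y. pl M x y = pl M y x) \<and>
     (\<forall>x. pl M x (zr M) = x) \<and>
     (\<forall>x y z. tm M (tm M x y) z = tm M x (tm M y z)) \<and>
     (\<forall>x y. tm M x y = tm M y x) \<and>
     (\<forall>x. tm M x (un M) = x) \<and>
     (\<forall>x. tm M x (zr M) = zr M) \<and>
     (\<forall>x y z. tm M x (pl M y z) = pl M (tm M x y) (tm M x z)) \<and>
     (\<forall>x y z. mt M (mt M x y) z = mt M x (mt M y z)) \<and>
     (\<forall>x y. mt M x y = mt M y x) \<and>
     (\<forall>x. mt M x x = x) \<and>
     (\<forall>x y z. jn M (jn M x y) z = jn M x (jn M y z)) \<and>
     (\<forall>x y. jn M x y = jn M y x) \<and>
     (\<forall>x. jn M x x = x) \<and>
     (\<forall>x y. mt M x (jn M x y) = x) \<and>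
     (\<forall>x y. jn M x (mt M x y) = x) \<and>
     (\<forall>x y z. pl M x (mt M y z) = mt M (pl M x y) (pl M x z)) \<and>
     (\<forall>x y z. pl M x (jn M y z) = jn M (pl M x y) (pl M x z)) \<and>
     (\<forall>x y z. tm M x (mt M y z) = mt M (tm M x y) (tm M x z)) \<and>
     (\<forall>x y z. tm M x (jn M y z) = jn M (tm M x y) (tm M x z)) \<and>
     (\<forall>x. le M (zr M) x)"

definition AA0 :: "'a lstr \<Rightarrow> bool" where
  "AA0 M \<longleftrightarrow> metric_structure M \<and> A1 M \<and>
     \<comment> \<open>(A2)\<close>
     (\<forall>x. (INF y. dd M x (pl M (mt M x y) (un M))) = 1 - nrm M x) \<and>
     (\<forall>x. le M x (tm M x x)) \<and>
     \<comment> \<open>(A3)\<close>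
     (\<forall>x y z. dd M (pl M x z) (pl M y z) = dd M x y) \<and>
     \<comment> \<open>(A4)\<close>
     (\<forall>x y z. dd M y z \<le> dd M (tm M x y) (tm M x z) + 1 - nrm M x) \<and>
     \<comment> \<open>(A5)\<close>
     (\<forall>n\<ge>1. \<forall>x y z. dd M (tm M x y) (tm M x z) = dd M (tm M (npow M x n) y) (tm M (npow M x n) z)
                 \<and> dd M (tm M (npow M x n) y) (tm M (npow M x n) z) \<le> dd M y z) \<and>
     \<comment> \<open>(A6)\<close>
     (\<forall>n\<ge>1. \<forall>x y. dd M (nsum M n x) (nsum M n y) = dd M x y
                 \<and> dd M (npow M x n) (npow M y n) = dd M x y) \<and>
     \<comment> \<open>(A7)\<close>
     (\<forall>x y. nrm M (mt M x y) + nrm M (jn M x y) = nrm M x + nrm M y) \<and>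
     \<comment> \<open>(A8)\<close>
     (\<forall>x y z. nrm M (pl M (tm M x y) z) = nrm M (pl M (mt M x y) z)) \<and>
     \<comment> \<open>(A9)\<close>
     (\<forall>x y z. nrm M (pl M (pl M x y) z) = nrm M (pl M (jn M x y) z)) \<and>
     \<comment> \<open>(A10)\<close>
     (\<forall>x y. (INF t. dd M (pl M (mt M x y) t) y) = 0)"

text \<open>PA^-: the first-order theory (with discrete metric) of nonnegative parts of
  discretely linearly ordered commutative rings with identity, in the language
  {+,*,meet,join,0,1}; axiomatized in the standard (Kaye) way, with the order
  given by x \<le> y iff meet x y = x.\<close>
definition PA_minus :: "'a lstr \<Rightarrow> bool" where
  "PA_minus M \<longleftrightarrow>
     (\<forall>x y. x \<noteq> y \<longrightarrow> dd M x y = 1) \<and>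
     A1 M \<and>
     (\<forall>x y. le M x y \<or> le M y x) \<and>
     (\<forall>x y z. lt M x y \<longrightarrow> lt M (pl M x z) (pl M y z)) \<and>
     (\<forall>x y z. lt M (zr M) z \<and> lt M x y \<longrightarrow> lt M (tm M x z) (tm M y z)) \<and>
     (\<forall>x y. le M x y \<longrightarrow> (\<exists>z. pl M x z = y)) \<and>
     lt M (zr M) (un M) \<and>
     (\<forall>x. lt M (zr M) x \<longrightarrow> le M (un M) x)"

end

theory Submission
  imports Defs
begin

text \<open>
  Axiom (A10) says that \<open>y\<close> is a limit of elements \<open>(x \<and> y) + t\<close>; hence any uniform lower
  bound for \<open>d(x + t, y)\<close> with \<open>x \<le> y\<close> must vanish. If the order is linear, an element
  \<open>x \<le> 1\<close> is idempotent and every \<open>d(x + t, 1)\<close> is at least \<open>min(|x|, d(x,1)/2)\<close>, so \<open>x\<close> is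
  \<open>0\<close> or \<open>1\<close>. By (A2), \<open>d(x \<and> 1, 1) \<le> 1 - |x|\<close>, so \<open>x \<and> 1 \<in> {0,1}\<close> holds for all \<open>x\<close>
  exactly when every nonzero \<open>x\<close> has norm 1. In that case every \<open>d(x + t, y)\<close> with \<open>x \<le> y\<close> is at least
  \<open>min(d(x,y), 1 - d(x,y))\<close>, so comparable elements are at distance 0 or 1, and (A10) then
  yields exact differences \<open>y = x + t\<close>. Linearity follows by writing \<open>a = m + t\<close>, \<open>b = m + s\<close>
  with \<open>m = a \<and> b\<close>: then \<open>t \<and> s = 0\<close>, and (A4) with (A8) gives \<open>|t| + |s| \<le> 1\<close>, so \<open>t = 0\<close>
  or \<open>s = 0\<close>. The remaining axioms of \<open>PA\<^sup>-\<close> follow from (A3) and (A4).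
\<close>

lemma PA_minus_imp_discrete:
  assumes "PA_minus M"
  shows "x = zr M \<or> nrm M x = 1"
  using assms unfolding PA_minus_def nrm_def by blast

locale AA0_model =
  fixes M :: "'a lstr"
  assumes AA0: "AA0 M"
begin

lemma metric: "metric_structure M" and A1: "A1 M"
  using AA0[unfolded AA0_def] by blast+

lemma dd_eq_0_iff: "dd M x y = 0 \<longleftrightarrow> x = y"
  and dd_commute: "dd M x y = dd M y x"
  and dd_triangle: "dd M x z \<le> dd M x y + dd M y z"
  and dd_le_1: "dd M x y \<le> 1"
  and dd_mt_lipschitz: "dd M (mt M x y) (mt M x' y') \<le> dd M x x' + dd M y y'"
  using metric[unfolded metric_structure_def] by blast+

lemma dd_self [simp]: "dd M x x = 0"
  by (simp add: dd_eq_0_iff)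

lemma dd_nonneg: "0 \<le> dd M x y"
  using dd_triangle[of x x y] dd_commute[of x y] dd_self[of x] by linarith

lemma pl_commute: "pl M x y = pl M y x"
  and pl_zr [simp]: "pl M x (zr M) = x"
  and tm_commute: "tm M x y = tm M y x"
  and tm_un [simp]: "tm M x (un M) = x"
  and tm_zr [simp]: "tm M x (zr M) = zr M"
  and tm_pl_distrib: "tm M x (pl M y z) = pl M (tm M x y) (tm M x z)"
  and mt_assoc: "mt M (mt M x y) z = mt M x (mt M y z)"
  and mt_commute: "mt M x y = mt M y x"
  and mt_idem [simp]: "mt M x x = x"
  and pl_mt_distrib: "pl M x (mt M y z) = mt M (pl M x y) (pl M x z)"
  and tm_mt_distrib: "tm M x (mt M y z) = mt M (tm M x y) (tm M x z)"
  and zr_le: "le M (zr M) x"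
  using A1[unfolded A1_def] by auto

lemma zr_pl [simp]: "pl M (zr M) x = x"
  using pl_commute pl_zr by metis

lemma inf_dd_mt_pl_un: "(INF y. dd M x (pl M (mt M x y) (un M))) = 1 - nrm M x"
  and le_tm_self: "le M x (tm M x x)"
  and dd_pl_cancel: "dd M (pl M x z) (pl M y z) = dd M x y"
  and dd_le_dd_tm: "dd M y z \<le> dd M (tm M x y) (tm M x z) + 1 - nrm M x"
  and dd_tm_npow_le: "n \<ge> 1 \<Longrightarrow>
     dd M (tm M (npow M x n) y) (tm M (npow M x n) z) \<le> dd M y z"
  and nrm_tm_pl: "nrm M (pl M (tm M x y) z) = nrm M (pl M (mt M x y) z)"
  and inf_dd_mt_pl: "(INF t. dd M (pl M (mt M x y) t) y) = 0"
  using AA0[unfolded AA0_def] by metis+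

lemma dd_tm_le: "dd M (tm M x y) (tm M x z) \<le> dd M y z"
  using dd_tm_npow_le[of 1 x y z] by (simp add: tm_commute[of x "un M"])

lemma nrm_tm: "nrm M (tm M x y) = nrm M (mt M x y)"
  using nrm_tm_pl[of x y "zr M"] by simp

lemma dd_pl_left_cancel: "dd M (pl M z x) (pl M z y) = dd M x y"
  using dd_pl_cancel pl_commute by metis

lemma dd_pl_self: "dd M x (pl M x t) = nrm M t"
  using dd_pl_left_cancel[of x "zr M" t] by (simp add: nrm_def dd_commute)

lemma le_trans: "le M x y \<Longrightarrow> le M y z \<Longrightarrow> le M x z"
  unfolding le_def by (metis mt_assoc)

lemma le_antisym: "le M x y \<Longrightarrow> le M y x \<Longrightarrow> x = y"
  unfolding le_def by (metis mt_commute)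

lemma le_iff_mt_right: "le M x y \<longleftrightarrow> mt M y x = x"
  unfolding le_def by (metis mt_commute)

lemma mt_le_left: "le M (mt M x y) x"
  unfolding le_def by (metis mt_assoc mt_commute mt_idem)

lemma mt_le_right: "le M (mt M x y) y"
  unfolding le_def by (metis mt_assoc mt_idem)

lemma mt_zr [simp]: "mt M (zr M) x = zr M" "mt M x (zr M) = zr M"
  using zr_le le_def mt_commute by metis+

lemma pl_mono: "le M x y \<Longrightarrow> le M (pl M z x) (pl M z y)"
  unfolding le_def by (metis pl_mt_distrib)

lemma tm_mono: "le M x y \<Longrightarrow> le M (tm M z x) (tm M z y)"
  unfolding le_def by (metis tm_mt_distrib)

lemma le_pl: "le M x (pl M x z)"
  using pl_mono[OF zr_le, of x z] by simp

lemma nrm_nonneg: "0 \<le> nrm M x"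
  by (simp add: nrm_def dd_nonneg)

lemma nrm_le_1: "nrm M x \<le> 1"
  by (simp add: nrm_def dd_le_1)

lemma nrm_eq_0_iff: "nrm M x = 0 \<longleftrightarrow> x = zr M"
  by (simp add: nrm_def dd_eq_0_iff)

lemma nrm_mono:
  assumes "le M x y"
  shows "nrm M x \<le> nrm M y"
  using dd_mt_lipschitz[of y x "zr M" x] assms
  by (simp add: nrm_def le_iff_mt_right)

lemma nrm_un [simp]: "nrm M (un M) = 1"
  using inf_dd_mt_pl_un[of "zr M"] by (simp add: nrm_def dd_commute)

lemma un_neq_zr: "un M \<noteq> zr M"
  using nrm_un nrm_eq_0_iff by force

lemma lt_pl_right:
  assumes "lt M x y"
  shows "lt M (pl M x z) (pl M y z)"
  using assms pl_mono[of x y z] pl_commute dd_pl_cancel[of x z y] dd_eq_0_iff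
  unfolding lt_def by metis

lemma lt_tm_right:
  assumes "nrm M z = 1" and "lt M x y"
  shows "lt M (tm M x z) (tm M y z)"
proof -
  have "tm M x z \<noteq> tm M y z"
  proof
    assume "tm M x z = tm M y z"
    then have "dd M x y \<le> 0"
      using dd_le_dd_tm[of x y z] assms(1) by (simp add: tm_commute)
    then show False
      using assms(2) dd_nonneg[of x y] dd_eq_0_iff unfolding lt_def by force
  qed
  moreover have "le M (tm M x z) (tm M y z)"
    using assms(2) tm_mono[of x y z] tm_commute unfolding lt_def by metis
  ultimately show ?thesis
    unfolding lt_def by simp
qed

lemma nrm_add_nrm_le_1_if_mt_eq_zr:
  assumes "mt M t s = zr M"
  shows "nrm M t + nrm M s \<le> 1"
proof -
  have "tm M t s = zr M"
    using assms nrm_tm[of t s] nrm_eq_0_iff by metis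
  then show ?thesis
    using dd_le_dd_tm[of s "zr M" t] by (simp add: nrm_def)
qed

lemma dd_mt_un_le: "dd M (mt M x (un M)) (un M) \<le> 1 - nrm M x"
proof -
  have "dd M (mt M x (un M)) (un M) \<le> dd M x (pl M (mt M x y) (un M))" for y
  proof -
    have "le M (un M) (pl M (mt M x y) (un M))"
      using le_pl[of "un M" "mt M x y"] by (simp add: pl_commute)
    then show ?thesis
      using dd_mt_lipschitz[of x "un M" "pl M (mt M x y) (un M)" "un M"]
      by (simp add: le_iff_mt_right)
  qed
  then have "dd M (mt M x (un M)) (un M) \<le> (INF y. dd M x (pl M (mt M x y) (un M)))"
    by (intro cINF_greatest) auto
  then show ?thesis
    using inf_dd_mt_pl_un by simp
qed

lemma lower_bound_dd_pl_nonpos: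
  assumes "le M x y" and "\<And>t. c \<le> dd M (pl M x t) y"
  shows "c \<le> 0"
proof -
  have "c \<le> (INF t. dd M (pl M (mt M x y) t) y)"
    using assms unfolding le_def by (intro cINF_greatest) auto
  then show ?thesis
    using inf_dd_mt_pl by simp
qed

lemma tm_idem_if_le_un:
  assumes "le M x (un M)"
  shows "tm M x x = x"
proof -
  have "tm M x x = mt M (tm M x x) x"
    using tm_mt_distrib[of x x "un M"] assms unfolding le_def by simp
  then show ?thesis
    using le_tm_self le_antisym unfolding le_def by metis
qed

lemma linear_le_un_imp_zr_or_un:
  assumes linear: "\<forall>x y. le M x y \<or> le M y x" and "le M x (un M)"
  shows "x = zr M \<or> x = un M"
proof -
  have idem: "tm M x x = x"
    using assms(2) by (rule tm_idem_if_le_un)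
  have "min (nrm M x) (dd M x (un M) / 2) \<le> dd M (pl M x t) (un M)" for t
  proof -
    have "dd M (pl M x (tm M x t)) x \<le> dd M (pl M x t) (un M)"
      using dd_tm_le[of x "pl M x t" "un M"] by (simp add: tm_pl_distrib idem)
    then have xt: "nrm M (tm M x t) \<le> dd M (pl M x t) (un M)"
      using dd_pl_self dd_commute by metis
    show ?thesis
    proof (cases "le M x t")
      case True
      then show ?thesis
        using nrm_mono[OF tm_mono[OF True, of x]] xt idem by simp
    next
      case False
      then have "le M (tm M t t) (tm M t x)"
        using linear tm_mono by blast
      then have "nrm M t \<le> dd M (pl M x t) (un M)"
        using nrm_mono le_tm_self le_trans tm_commute xt by (metis order_trans)
      moreover have "dd M x (un M) \<le> nrm M t + dd M (pl M x t) (un M)"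
        using dd_triangle[of x "un M" "pl M x t"] by (simp add: dd_pl_self)
      ultimately show ?thesis
        by linarith
    qed
  qed
  then have "min (nrm M x) (dd M x (un M) / 2) \<le> 0"
    by (rule lower_bound_dd_pl_nonpos[OF assms(2)])
  then show ?thesis
    using nrm_nonneg[of x] nrm_eq_0_iff[of x] dd_nonneg[of x "un M"] dd_eq_0_iff[of x "un M"]
    by force
qed

lemma linear_imp_no_element_between:
  assumes "\<forall>x y. le M x y \<or> le M y x"
  shows "\<not> (\<exists>x. lt M (zr M) x \<and> lt M x (un M))"
  using linear_le_un_imp_zr_or_un[OF assms] unfolding lt_def by blast

lemma no_element_between_imp_discrete:
  assumes "\<not> (\<exists>x. lt M (zr M) x \<and> lt M x (un M))"
  shows "x = zr M \<or> nrm M x = 1"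
proof -
  have "mt M x (un M) = zr M \<or> mt M x (un M) = un M"
    using assms zr_le mt_le_right unfolding lt_def by metis
  then show ?thesis
  proof
    assume "mt M x (un M) = zr M"
    moreover have "dd M (zr M) (un M) = 1"
      using nrm_un by (simp add: nrm_def dd_commute)
    ultimately have "nrm M x \<le> 0"
      using dd_mt_un_le[of x] by simp
    then show ?thesis
      using nrm_nonneg[of x] nrm_eq_0_iff[of x] by simp
  next
    assume "mt M x (un M) = un M"
    then show ?thesis
      using nrm_mono[of "un M" x] nrm_le_1[of x] by (simp add: le_iff_mt_right)
  qed
qed

lemma discrete_imp_no_element_between:
  assumes "\<forall>x. x = zr M \<or> nrm M x = 1"
  shows "\<not> (\<exists>x. lt M (zr M) x \<and> lt M x (un M))"
proof
  assume "\<exists>x. lt M (zr M) x \<and> lt M x (un M)"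
  then obtain x where "lt M (zr M) x" and x: "lt M x (un M)"
    by blast
  then have "nrm M x = 1"
    using assms unfolding lt_def by metis
  then have "dd M (mt M x (un M)) (un M) \<le> 0"
    using dd_mt_un_le[of x] by simp
  then show False
    using x dd_nonneg dd_eq_0_iff unfolding lt_def le_def by (metis order_antisym)
qed

context
  assumes discrete: "\<forall>x. x = zr M \<or> nrm M x = 1"
begin

lemma dd_eq_0_or_1_if_le:
  assumes "le M x y"
  shows "dd M x y = 0 \<or> dd M x y = 1"
proof -
  have "min (dd M x y) (1 - dd M x y) \<le> dd M (pl M x t) y" for t
    using discrete dd_triangle[of x y "pl M x t"] dd_triangle[of x "pl M x t" y]
      dd_commute[of y "pl M x t"] dd_pl_self[of x t] nrm_eq_0_iff[of t]
    by fastforce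
  then have "min (dd M x y) (1 - dd M x y) \<le> 0"
    by (rule lower_bound_dd_pl_nonpos[OF assms])
  then show ?thesis
    using dd_nonneg[of x y] dd_le_1[of x y] by linarith
qed

lemma le_imp_exists_pl:
  assumes "le M x y"
  obtains t where "pl M x t = y"
proof -
  obtain t where t: "dd M (pl M x t) y < 1"
    using lower_bound_dd_pl_nonpos[OF assms, of 1] by (meson not_le zero_less_one)
  have "dd M (mt M (pl M x t) y) y < 1"
    using dd_mt_lipschitz[of "pl M x t" y y y] t by simp
  then have "mt M (pl M x t) y = y"
    using dd_eq_0_or_1_if_le[OF mt_le_right[of "pl M x t" y]] dd_eq_0_iff by force
  then have "le M y (pl M x t)"
    by (simp add: le_iff_mt_right)
  then have "pl M x t = y"
    using dd_eq_0_or_1_if_le t dd_eq_0_iff dd_commute by force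
  then show thesis
    by (rule that)
qed

lemma discrete_imp_linear: "le M a b \<or> le M b a"
proof -
  let ?m = "mt M a b"
  obtain t where t: "pl M ?m t = a"
    using le_imp_exists_pl[OF mt_le_left] .
  obtain s where s: "pl M ?m s = b"
    using le_imp_exists_pl[OF mt_le_right] .
  have "pl M ?m (mt M t s) = pl M ?m (zr M)"
    using pl_mt_distrib[of ?m t s] t s by simp
  then have "dd M (mt M t s) (zr M) = 0"
    using dd_pl_left_cancel[of ?m "mt M t s" "zr M"] by simp
  then have "mt M t s = zr M"
    by (simp add: dd_eq_0_iff)
  then have "nrm M t + nrm M s \<le> 1"
    by (rule nrm_add_nrm_le_1_if_mt_eq_zr)
  then have "t = zr M \<or> s = zr M"
    using discrete[rule_format, of t] discrete[rule_format, of s] by auto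
  then show ?thesis
  proof
    assume "t = zr M"
    then have "a = ?m"
      using t by simp
    then show ?thesis
      by (metis mt_le_right)
  next
    assume "s = zr M"
    then have "b = ?m"
      using s by simp
    then show ?thesis
      by (metis mt_le_left)
  qed
qed

lemma zr_lt_imp_un_le:
  assumes "lt M (zr M) x"
  shows "le M (un M) x"
  using discrete_imp_linear[of x "un M"] linear_le_un_imp_zr_or_un[of x] discrete_imp_linear assms
  unfolding lt_def by metis

lemma discrete_imp_PA_minus: "PA_minus M"
  unfolding PA_minus_def
proof (intro conjI allI impI)
  show "dd M x y = 1" if "x \<noteq> y" for x y
    using that discrete_imp_linear[of x y] dd_eq_0_or_1_if_le dd_eq_0_iff dd_commute by metis
  show "lt M (tm M x z) (tm M y z)" if "lt M (zr M) z \<and> lt M x y" for x y z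
  proof (rule lt_tm_right)
    show "nrm M z = 1"
      using that discrete unfolding lt_def by metis
  qed (use that in blast)
  show "\<exists>z. pl M x z = y" if "le M x y" for x y
    using le_imp_exists_pl[OF that] by metis
  show "lt M (zr M) (un M)"
    using zr_le un_neq_zr unfolding lt_def by metis
qed (auto simp: A1 discrete_imp_linear lt_pl_right zr_lt_imp_un_le)

end

end

theorem mainTheorem2:
  fixes M :: "'a lstr"
  assumes "AA0 M"
  shows "((\<forall>x y. le M x y \<or> le M y x) \<longleftrightarrow> \<not> (\<exists>x. lt M (zr M) x \<and> lt M x (un M)))
       \<and> (\<not> (\<exists>x. lt M (zr M) x \<and> lt M x (un M)) \<longleftrightarrow> (\<forall>x. x = zr M \<or> nrm M x = 1))
       \<and> ((\<forall>x. x = zr M \<or> nrm M x = 1) \<longleftrightarrow> PA_minus M)"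
proof -
  interpret AA0_model M
    using assms by unfold_locales
  show ?thesis
    using linear_imp_no_element_between no_element_between_imp_discrete
      discrete_imp_no_element_between discrete_imp_linear discrete_imp_PA_minus PA_minus_imp_discrete[of M]
    by blast
qed

end
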